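(* Let $\varepsilon>0$ and let $U_\varepsilon$ be a bounded, smooth solution of $$\begin{cases}\partial_tU_\varepsilon=\Delta U_\varepsilon&\text{in }\mathbb{R}^{m+1}_+\times(0,\infty),\\ U_\varepsilon(\cdot,0)=U_0&\text{in }\mathbb{R}^{m+1}_+,\\ \lim_{y\to0^+}\partial_yU_\varepsilon=-\frac{c_{\frac12}}{\varepsilon^2}(1-|U_\varepsilon|^2)U_\varepsilon&\text{on }\mathbb{R}^m\times\{0\}\times(0,\infty).\end{cases}$$ Then $|U_\varepsilon|\le1$ in $\mathbb{R}^{m+1}_+\times(0,\infty)$.
   Context: $\mathbb{R}^{m+1}_+=\{(x,y):x\in\mathbb{R}^m,y>0\}$; $c_{\frac12}=1$. $u_0\in\dot H^{1/2}(\mathbb{R}^m,\mathbb{R}^\ell)$ satisfies $|u_0|=1$ a.e., and $U_0$ is its harmonic extension to $\mathbb{R}^{m+1}_+$ (so $U_0(x,0)=u_0(x)$). *)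

theory Defs
  imports "HOL-Analysis.Analysis"
begin

fun higher_dir :: "('a::real_normed_vector \<Rightarrow> 'b::real_normed_vector) \<Rightarrow> 'a list \<Rightarrow> 'a \<Rightarrow> 'b" where
  "higher_dir f [] = f"
| "higher_dir f (v # vs) = (\<lambda>p. frechet_derivative (higher_dir f vs) (at p) v)"

definition smooth_on :: "'a::real_normed_vector set \<Rightarrow> ('a \<Rightarrow> 'b::real_normed_vector) \<Rightarrow> bool" where
  "smooth_on S f \<longleftrightarrow> open S \<and>
     (\<forall>vs. higher_dir f vs differentiable_on S \<and> continuous_on S (higher_dir f vs))"

text \<open>Space-time points ((x,y),t), x in R^m, y > 0 the extension variable, t time.\<close>
definition e_x :: "'m::finite \<Rightarrow> ((real^'m) \<times> real) \<times> real" where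
  "e_x i = ((axis i 1, 0), 0)"
definition e_y :: "((real^'m::finite) \<times> real) \<times> real" where
  "e_y = ((0, 1), 0)"
definition e_t :: "((real^'m::finite) \<times> real) \<times> real" where
  "e_t = ((0, 0), 1)"

definition uncurry3 :: "(real^'m \<Rightarrow> real \<Rightarrow> real \<Rightarrow> 'b) \<Rightarrow> ((real^'m) \<times> real) \<times> real \<Rightarrow> 'b" where
  "uncurry3 U = (\<lambda>((x, y), t). U x y t)"

definition laplacian_xy :: "(real^'m::finite \<Rightarrow> real \<Rightarrow> real \<Rightarrow> 'b::real_normed_vector)
    \<Rightarrow> real^'m \<Rightarrow> real \<Rightarrow> real \<Rightarrow> 'b" where
  "laplacian_xy U x y t =
     (\<Sum>i\<in>UNIV. higher_dir (uncurry3 U) [e_x i, e_x i] ((x, y), t))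
     + higher_dir (uncurry3 U) [e_y, e_y] ((x, y), t)"

definition dt :: "(real^'m::finite \<Rightarrow> real \<Rightarrow> real \<Rightarrow> 'b::real_normed_vector)
    \<Rightarrow> real^'m \<Rightarrow> real \<Rightarrow> real \<Rightarrow> 'b" where
  "dt U x y t = higher_dir (uncurry3 U) [e_t] ((x, y), t)"

definition dy :: "(real^'m::finite \<Rightarrow> real \<Rightarrow> real \<Rightarrow> 'b::real_normed_vector)
    \<Rightarrow> real^'m \<Rightarrow> real \<Rightarrow> real \<Rightarrow> 'b" where
  "dy U x y t = higher_dir (uncurry3 U) [e_y] ((x, y), t)"

definition hdot_half :: "(real^'m::finite \<Rightarrow> real^'l::finite) \<Rightarrow> bool" where
  "hdot_half u \<longleftrightarrow> u \<in> borel_measurable lborel \<and>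
     (\<integral>\<^sup>+ x. \<integral>\<^sup>+ z. ennreal (norm (u x - u z) ^ 2 / norm (x - z) ^ (CARD('m) + 1)) \<partial>lborel \<partial>lborel) < \<infinity>"

definition poisson_kernel :: "real^'m::finite \<Rightarrow> real \<Rightarrow> real" where
  "poisson_kernel x y =
     Gamma ((real CARD('m) + 1) / 2) / pi powr ((real CARD('m) + 1) / 2)
     * y / (norm x ^ 2 + y ^ 2) powr ((real CARD('m) + 1) / 2)"

definition harmonic_ext :: "(real^'m::finite \<Rightarrow> real^'l::finite) \<Rightarrow> real^'m \<Rightarrow> real \<Rightarrow> real^'l" where
  "harmonic_ext u x y = (\<integral>z. poisson_kernel (x - z) y *\<^sub>R u z \<partial>lborel)"

end

(*
  Suppose |U| > 1 somewhere. For small delta > 0 the function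
    M = |U|^2 - 1 - delta * (h(y,t) + |x|^2 + y^2 + (2m+3) t)
  is then positive somewhere. The quadratic terms confine its positive values to a bounded set
  in (x,y). The barrier h blows up at the corner y = t = 0, where U is not assumed continuous,
  and the initial values (a Poisson average of unit vectors) have norm at most 1; hence M < 0
  near t = 0 and M attains a positive maximum over y >= 0, 0 < t <= T. At a boundary maximum
  the condition d_y U = -eps^-2 (1 - |U|^2) U makes |U|^2 strictly increasing in y while
  d_y h = 0, so M increases into the interior. At an interior maximum the heat equation gives
  (d_t - Laplacian) |U|^2 <= 0, whereas h_t >= h_yy and 2m+3 > Laplacian(|x|^2 + y^2) make the
  delta-term a strict supersolution, contradicting the first and second order conditions.
*)

theory Submission
  imports Defs
begin

lemma uncurry3_apply [simp]: "uncurry3 U ((x, y), t) = U x y t"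
  by (simp add: uncurry3_def)

lemma smooth_on_differentiable_at:
  assumes "smooth_on S f" "p \<in> S"
  shows "higher_dir f vs differentiable (at p)"
  using assms unfolding smooth_on_def by (auto simp: differentiable_on_eq_differentiable_at)

lemma has_vector_derivative_along_line:
  fixes f :: "'a::real_normed_vector \<Rightarrow> 'b::real_normed_vector"
  assumes "f differentiable (at (p + s *\<^sub>R v))"
  shows "((\<lambda>s. f (p + s *\<^sub>R v)) has_vector_derivative higher_dir f [v] (p + s *\<^sub>R v)) (at s)"
proof -
  let ?D = "frechet_derivative f (at (p + s *\<^sub>R v))"
  have f: "(f has_derivative ?D) (at (p + s *\<^sub>R v))"
    using assms frechet_derivative_works by blast
  have "((\<lambda>s. p + s *\<^sub>R v) has_derivative (\<lambda>h. h *\<^sub>R v)) (at s)"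
    by (auto intro!: derivative_eq_intros)
  from diff_chain_at[OF this f] have "((\<lambda>s. f (p + s *\<^sub>R v)) has_derivative (\<lambda>h. ?D (h *\<^sub>R v))) (at s)"
    by (simp add: o_def)
  then show ?thesis
    using linear_scale[OF has_derivative_linear[OF f]] by (simp add: has_vector_derivative_def)
qed

lemma has_real_derivative_inner:
  fixes a b :: "real \<Rightarrow> 'a::real_inner"
  assumes "(a has_vector_derivative a') (at s)" "(b has_vector_derivative b') (at s)"
  shows "((\<lambda>s. inner (a s) (b s)) has_real_derivative inner (a s) b' + inner a' (b s)) (at s)"
  using bounded_bilinear.has_vector_derivative[OF bounded_bilinear_inner assms]
  by (simp add: has_real_derivative_iff_has_vector_derivative)

lemma has_real_derivative_power2_norm:
  fixes a :: "real \<Rightarrow> 'a::real_inner"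
  assumes "(a has_vector_derivative a') (at s)"
  shows "((\<lambda>s. (norm (a s))\<^sup>2) has_real_derivative 2 * inner (a s) a') (at s)"
  using has_real_derivative_inner[OF assms assms]
  by (simp add: power2_norm_eq_inner inner_commute)

lemma has_real_derivative_shift:
  "(f has_real_derivative D) (at (a + s)) \<Longrightarrow> ((\<lambda>s. f (a + s)) has_real_derivative D) (at s)"
  using DERIV_shift[of f D s a] by (simp add: add.commute)

lemma DERIV_local_max_second_nonpos:
  fixes g g' :: "real \<Rightarrow> real"
  assumes r: "r > 0"
    and max: "\<And>s. \<bar>s\<bar> < r \<Longrightarrow> g s \<le> g 0"
    and g: "\<And>s. \<bar>s\<bar> < r \<Longrightarrow> (g has_real_derivative g' s) (at s)"
    and g': "(g' has_real_derivative c) (at 0)"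
  shows "c \<le> 0"
proof (rule ccontr)
  assume "\<not> c \<le> 0"
  then have "c > 0"
    by simp
  have "g' 0 = 0"
    by (rule DERIV_local_max[OF g[of 0] r]) (use r max in auto)
  with DERIV_pos_inc_right[OF g' \<open>c > 0\<close>] obtain d
    where d: "d > 0" "\<And>h. 0 < h \<Longrightarrow> h < d \<Longrightarrow> g' h > 0"
    by auto
  define h where "h = min d r / 2"
  have h: "0 < h" "h < d" "h < r"
    using d r unfolding h_def by auto
  have "g 0 < g h"
  proof (rule DERIV_pos_imp_increasing_open[OF h(1)])
    fix s
    assume "0 < s" "s < h"
    with g[of s] d(2)[of s] h show "\<exists>l. (g has_real_derivative l) (at s) \<and> l > 0"
      by auto
  next
    show "continuous_on {0..h} g"
      using g h by (intro continuous_at_imp_continuous_on ballI DERIV_isCont[OF g]) auto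
  qed
  with max[of h] h show False
    by simp
qed

lemma DERIV_local_left_max_nonneg:
  fixes g :: "real \<Rightarrow> real"
  assumes r: "r > 0"
    and max: "\<And>s. -r < s \<Longrightarrow> s \<le> 0 \<Longrightarrow> g s \<le> g 0"
    and g: "(g has_real_derivative c) (at 0)"
  shows "c \<ge> 0"
proof (rule ccontr)
  assume "\<not> c \<ge> 0"
  from DERIV_neg_dec_left[OF g] this obtain d
    where d: "d > 0" "\<And>h. 0 < h \<Longrightarrow> h < d \<Longrightarrow> g 0 < g (0 - h)"
    by auto
  define h where "h = min d r / 2"
  have "0 < h" "h < d" "h < r"
    using d r unfolding h_def by auto
  with d(2)[of h] max[of "-h"] show False
    by simp
qed

lemma second_derivative_along_line_at_max:
  fixes f :: "'a::real_normed_vector \<Rightarrow> 'b::real_inner"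
  assumes r: "r > 0"
    and f: "\<And>s. \<bar>s\<bar> < r \<Longrightarrow> f differentiable (at (p + s *\<^sub>R v))"
    and Df: "higher_dir f [v] differentiable (at p)"
    and P: "\<And>s. \<bar>s\<bar> < r \<Longrightarrow> (P has_real_derivative P' s) (at s)"
    and P': "(P' has_real_derivative c) (at 0)"
    and max: "\<And>s. \<bar>s\<bar> < r \<Longrightarrow> (norm (f (p + s *\<^sub>R v)))\<^sup>2 - P s \<le> (norm (f p))\<^sup>2 - P 0"
  shows "2 * inner (f p) (higher_dir f [v, v] p) \<le> c"
proof -
  define g' where "g' s = 2 * inner (f (p + s *\<^sub>R v)) (higher_dir f [v] (p + s *\<^sub>R v)) - P' s" for s
  have line: "((\<lambda>s. f (p + s *\<^sub>R v)) has_vector_derivative higher_dir f [v] (p + s *\<^sub>R v)) (at s)"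
    if "\<bar>s\<bar> < r" for s
    using has_vector_derivative_along_line[OF f[OF that]] .
  have "((\<lambda>s. higher_dir f [v] (p + s *\<^sub>R v)) has_vector_derivative higher_dir f [v, v] p) (at 0)"
    using has_vector_derivative_along_line[of "higher_dir f [v]" p 0 v] Df by simp
  from has_real_derivative_inner[OF line[of 0] this] r
  have "(g' has_real_derivative 2 * (inner (f p) (higher_dir f [v, v] p) + (norm (higher_dir f [v] p))\<^sup>2) - c) (at 0)"
    unfolding g'_def by (auto intro!: derivative_eq_intros P' simp: power2_norm_eq_inner)
  moreover have "((\<lambda>s. (norm (f (p + s *\<^sub>R v)))\<^sup>2 - P s) has_real_derivative g' s) (at s)" if "\<bar>s\<bar> < r" for s
    unfolding g'_def by (intro DERIV_diff has_real_derivative_power2_norm line P that)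
  ultimately have "2 * (inner (f p) (higher_dir f [v, v] p) + (norm (higher_dir f [v] p))\<^sup>2) - c \<le> 0"
    using max by (intro DERIV_local_max_second_nonpos[OF r, of "\<lambda>s. (norm (f (p + s *\<^sub>R v)))\<^sup>2 - P s" g']) auto
  then show ?thesis
    by (smt (verit) zero_le_power2)
qed

lemma derivative_along_line_at_left_max:
  fixes f :: "'a::real_normed_vector \<Rightarrow> 'b::real_inner"
  assumes r: "r > 0"
    and f: "f differentiable (at p)"
    and P: "(P has_real_derivative c) (at 0)"
    and max: "\<And>s. -r < s \<Longrightarrow> s \<le> 0 \<Longrightarrow> (norm (f (p + s *\<^sub>R v)))\<^sup>2 - P s \<le> (norm (f p))\<^sup>2 - P 0"
  shows "c \<le> 2 * inner (f p) (higher_dir f [v] p)"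
proof -
  have "((\<lambda>s. f (p + s *\<^sub>R v)) has_vector_derivative higher_dir f [v] p) (at 0)"
    using has_vector_derivative_along_line[of f p 0 v] f by simp
  from DERIV_diff[OF has_real_derivative_power2_norm[OF this] P]
  have "((\<lambda>s. (norm (f (p + s *\<^sub>R v)))\<^sup>2 - P s) has_real_derivative 2 * inner (f p) (higher_dir f [v] p) - c) (at 0)"
    by simp
  from DERIV_local_left_max_nonneg[OF r _ this] max show ?thesis
    by simp
qed

lemma compact_cylinder:

  "compact {((x::'a::euclidean_space, y::real), t::real). inner x x + y\<^sup>2 \<le> C \<and> a \<le> y \<and> b \<le> t \<and> t \<le> T}"
  (is "compact ?K")
proof -
  have "?K = {p. inner (fst (fst p)) (fst (fst p)) + (snd (fst p))\<^sup>2 \<le> C \<and> a \<le> snd (fst p) \<and> b \<le> snd p \<and> snd p \<le> T}"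
    by auto
  also have "closed \<dots>"
    by (intro closed_Collect_conj closed_Collect_le continuous_intros)
  finally have "closed ?K" .
  moreover have "norm p \<le> sqrt C + (\<bar>b\<bar> + \<bar>T\<bar>)" if "p \<in> ?K" for p
  proof -
    obtain x y t where p: "p = ((x, y), t)" "inner x x + y\<^sup>2 \<le> C" "b \<le> t" "t \<le> T"
      using \<open>p \<in> ?K\<close> by auto
    have "norm (x, y) = sqrt (inner x x + y\<^sup>2)"
      by (simp add: norm_Pair power2_norm_eq_inner)
    also have "\<dots> \<le> sqrt C"
      using p by simp
    finally show ?thesis
      using norm_Pair_le[of "(x, y)" t] p by simp
  qed
  then have "bounded ?K"
    unfolding bounded_iff by blast
  ultimately show ?thesis
    by (simp add: compact_eq_bounded_closed)
qed

lemma compact_superlevel_attains_sup: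
  fixes f :: "'a::topological_space \<Rightarrow> real"
  assumes "compact K" "continuous_on K f" "K \<subseteq> D"
    and superlevel: "\<And>p. p \<in> D \<Longrightarrow> \<mu> \<le> f p \<Longrightarrow> p \<in> K"
    and "p1 \<in> D" "\<mu> \<le> f p1"
  obtains p0 where "p0 \<in> K" "\<mu> \<le> f p0" "\<And>p. p \<in> D \<Longrightarrow> f p \<le> f p0"
proof -
  have "p1 \<in> K"
    using assms by blast
  with continuous_attains_sup[OF assms(1) _ assms(2)] obtain p0
    where p0: "p0 \<in> K" "\<And>p. p \<in> K \<Longrightarrow> f p \<le> f p0"
    by blast
  with \<open>p1 \<in> K\<close> \<open>\<mu> \<le> f p1\<close> have "\<mu> \<le> f p0"
    by force
  moreover have "f p \<le> f p0" if "p \<in> D" for p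
    using superlevel[OF that] p0(2) \<open>\<mu> \<le> f p0\<close> by force
  ultimately show ?thesis
    using that p0(1) by blast
qed

lemma power2_norm_minus_one_less:
  fixes a b :: "'a::real_normed_vector"
  assumes "norm a \<le> 1" "norm b \<le> B" "dist b a < e"
  shows "(norm b)\<^sup>2 - 1 < e * (B + 1)"
proof -
  have e: "e > 0"
    using assms(3) zero_le_dist[of b a] by linarith
  show ?thesis
  proof (cases "norm b \<le> 1")
    case True
    then have "(norm b)\<^sup>2 - 1 \<le> 0"
      by (simp add: power_le_one)
    also have "0 < e * (B + 1)"
      using e assms(2) norm_ge_zero[of b] by (intro mult_pos_pos) linarith+
    finally show ?thesis .
  next
    case False
    have "(norm b)\<^sup>2 - 1 = (norm b - 1) * (norm b + 1)"
      by (simp add: power2_eq_square algebra_simps)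
    also have "\<dots> < e * (norm b + 1)"
      using assms(1,3) norm_triangle_ineq2[of b a] False
      by (intro mult_strict_right_mono) (auto simp: dist_norm)
    also have "\<dots> \<le> e * (B + 1)"
      using e assms(2) by simp
    finally show ?thesis .
  qed
qed

lemma inner_scaleR_one_minus_power2_norm_pos:
  fixes u :: "'a::real_inner"
  assumes "c > 0" "1 < norm u"
  shows "0 < inner u (- c *\<^sub>R ((1 - (norm u)\<^sup>2) *\<^sub>R u))"
proof -
  have "1 < (norm u)\<^sup>2"
    using assms(2) by (simp add: one_less_power)
  then have "0 < c * ((norm u)\<^sup>2 - 1) * (norm u)\<^sup>2"
    using assms(1) by (intro mult_pos_pos) auto
  also have "\<dots> = inner u (- c *\<^sub>R ((1 - (norm u)\<^sup>2) *\<^sub>R u))"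
    by (simp add: power2_norm_eq_inner algebra_simps)
  finally show ?thesis .
qed

lemma nn_integral_layer_powr:
  fixes c s :: real
  assumes "c \<ge> 0" "s > 0"
  shows "(\<integral>\<^sup>+\<mu>. ennreal (indicator {0..c} \<mu> * (s * \<mu> powr (s - 1))) \<partial>lborel) = c powr s"
proof -
  have "((\<lambda>\<mu>. \<mu> powr (s - 1)) has_integral c powr (s - 1 + 1) / (s - 1 + 1)) {0..c}"
    by (rule has_integral_powr_from_0) (use assms in auto)
  then have "((\<lambda>\<mu>. s * \<mu> powr (s - 1)) has_integral s * (c powr (s - 1 + 1) / (s - 1 + 1))) {0..c}"
    by (rule has_integral_mult_right)
  then have "((\<lambda>\<mu>. s * \<mu> powr (s - 1)) has_integral c powr s) {0..c}"
    using assms by simp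
  from nn_integral_has_integral_lebesgue[OF _ this] assms show ?thesis
    by simp
qed

lemma le_inverse_one_plus_sq_norm_iff:
  fixes v :: "'a::real_normed_vector"
  assumes "0 < \<mu>" "\<mu> \<le> 1"
  shows "\<mu> \<le> 1 / (1 + (norm v)\<^sup>2) \<longleftrightarrow> v \<in> cball 0 (sqrt (1 / \<mu> - 1))"
proof -
  have "\<mu> \<le> 1 / (1 + (norm v)\<^sup>2) \<longleftrightarrow> \<mu> * (1 + (norm v)\<^sup>2) \<le> 1"
    by (simp add: pos_le_divide_eq add_pos_nonneg)
  also have "\<dots> \<longleftrightarrow> (norm v)\<^sup>2 \<le> 1 / \<mu> - 1"
    using assms by (simp add: field_simps)
  also have "\<dots> \<longleftrightarrow> norm v \<le> sqrt (1 / \<mu> - 1)"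
    by (metis norm_ge_zero real_le_rsqrt real_sqrt_le_iff real_sqrt_unique)
  finally show ?thesis
    by simp
qed

lemma powr_mult_sqrt_inverse_minus_one_pow:
  fixes \<mu> :: real
  assumes "0 < \<mu>" "\<mu> < 1"
  shows "\<mu> powr ((real n + 1) / 2 - 1) * sqrt (1 / \<mu> - 1) ^ n
       = \<mu> powr (1/2 - 1) * (1 - \<mu>) powr (real n / 2 + 1 - 1)"
proof -
  have "sqrt (1 / \<mu> - 1) ^ n = ((1 - \<mu>) / \<mu>) powr (real n / 2)"
    using assms by (simp add: field_simps powr_half_sqrt[symmetric] powr_realpow[symmetric] powr_powr)
  also have "\<dots> = (1 - \<mu>) powr (real n / 2) / \<mu> powr (real n / 2)"
    using assms by (simp add: powr_divide)
  finally have "\<mu> powr ((real n + 1) / 2 - 1) * sqrt (1 / \<mu> - 1) ^ n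
      = \<mu> powr ((real n + 1) / 2 - 1 - real n / 2) * (1 - \<mu>) powr (real n / 2)"
    by (simp add: powr_diff)
  also have "(real n + 1) / 2 - 1 - real n / 2 = 1/2 - 1"
    by (simp add: field_simps)
  finally show ?thesis
    by simp
qed

lemma unit_ball_vol_Beta:
  fixes n :: nat
  defines "s \<equiv> (real n + 1) / 2"
  shows "s * unit_ball_vol (real n) * Beta (1/2) (real n / 2 + 1) = pi powr s / Gamma s"
proof -
  have s: "s > 0"
    unfolding s_def by simp
  have "Gamma (real n / 2 + 1) > 0" "Gamma s > 0"
    using s by (auto intro: Gamma_real_pos)
  moreover have "Beta (1/2) (real n / 2 + 1) = sqrt pi * Gamma (real n / 2 + 1) / (s * Gamma s)"
  proof -
    have "1/2 + (real n / 2 + 1) = s + 1"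
      unfolding s_def by (simp add: field_simps)
    moreover have "Gamma (s + 1) = s * Gamma s"
      using s by (intro Gamma_plus1) (metis nonpos_Ints_nonpos not_le)
    ultimately show ?thesis
      by (simp add: Beta_def Gamma_one_half_real)
  qed
  moreover have "pi powr s = pi powr (real n / 2) * sqrt pi"
    unfolding s_def by (simp add: powr_half_sqrt[symmetric] powr_add[symmetric] add_divide_distrib)
  ultimately show ?thesis
    unfolding unit_ball_vol_def using s
    by (simp add: divide_simps del: Gamma_real_pos) (simp add: algebra_simps)
qed

lemma emeasure_superlevel_inverse_one_plus_sq_norm:
  assumes "0 < \<mu>" "\<mu> < 1"
  shows "emeasure lborel {v::'a::euclidean_space. \<mu> \<le> 1 / (1 + (norm v)\<^sup>2)}
       = ennreal (unit_ball_vol DIM('a) * sqrt (1 / \<mu> - 1) ^ DIM('a))"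
proof -
  have "{v::'a. \<mu> \<le> 1 / (1 + (norm v)\<^sup>2)} = cball 0 (sqrt (1 / \<mu> - 1))"
    using le_inverse_one_plus_sq_norm_iff[OF assms(1) less_imp_le[OF assms(2)]] by blast
  moreover have "sqrt (1 / \<mu> - 1) > 0"
    using assms by simp
  ultimately show ?thesis
    using emeasure_cball[of "sqrt (1 / \<mu> - 1)" "0::'a"] by simp
qed

lemma borel_measurable_layer_integrand:
  "(\<lambda>(v::'a::euclidean_space, \<mu>). ennreal (indicator {0..1 / (1 + (norm v)\<^sup>2)} \<mu> * (s * \<mu> powr (s - 1))))
     \<in> borel_measurable (lborel \<Otimes>\<^sub>M lborel)"
proof -
  define C where "C = {z::'a \<times> real. 0 \<le> snd z \<and> snd z \<le> 1 / (1 + (norm (fst z))\<^sup>2)}"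
  have "closed C"
    unfolding C_def
    by (intro closed_Collect_conj closed_Collect_le continuous_intros continuous_on_divide)
       (auto, metis add_pos_nonneg zero_less_one zero_le_power2 less_irrefl)
  then have [measurable]: "C \<in> sets borel"
    by (simp add: borel_closed)
  have [measurable]: "snd \<in> borel_measurable (borel :: ('a \<times> real) measure)"
    by (intro borel_measurable_continuous_onI continuous_intros)
  have "(\<lambda>(v, \<mu>). ennreal (indicator {0..1 / (1 + (norm v)\<^sup>2)} \<mu> * (s * \<mu> powr (s - 1))))
      = (\<lambda>z. ennreal (indicator C z * (s * snd z powr (s - 1))))"
    unfolding C_def by (auto simp: indicator_def fun_eq_iff)
  then show ?thesis
    unfolding lborel_prod by simp
qed

lemma nn_integral_layer_integrand_slice:
  defines "n \<equiv> DIM('a::euclidean_space)"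
  defines "s \<equiv> (real n + 1) / 2"
  assumes "\<mu> \<noteq> 0" "\<mu> \<noteq> 1"
  shows "(\<integral>\<^sup>+v. ennreal (indicator {0..1 / (1 + (norm (v::'a))\<^sup>2)} \<mu> * (s * \<mu> powr (s - 1))) \<partial>lborel)
    = ennreal (indicator {0..1} \<mu> * (s * unit_ball_vol (real n) * (\<mu> powr (1/2 - 1) * (1 - \<mu>) powr (real n / 2 + 1 - 1))))"
proof (cases "0 < \<mu> \<and> \<mu> < 1")
  case True
  have s: "s > 0"
    unfolding s_def by simp
  have "(\<integral>\<^sup>+v. ennreal (indicator {0..1 / (1 + (norm (v::'a))\<^sup>2)} \<mu> * (s * \<mu> powr (s - 1))) \<partial>lborel)
      = (\<integral>\<^sup>+v. ennreal (s * \<mu> powr (s - 1)) * indicator {v::'a. \<mu> \<le> 1 / (1 + (norm v)\<^sup>2)} v \<partial>lborel)"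
    using True by (intro nn_integral_cong) (auto simp: indicator_def)
  also have "\<dots> = ennreal (s * \<mu> powr (s - 1)) * ennreal (unit_ball_vol (real n) * sqrt (1 / \<mu> - 1) ^ n)"
    using True unfolding n_def by (simp add: nn_integral_cmult_indicator emeasure_superlevel_inverse_one_plus_sq_norm)
  also have "\<dots> = ennreal (s * unit_ball_vol (real n) * (\<mu> powr ((real n + 1) / 2 - 1) * sqrt (1 / \<mu> - 1) ^ n))"
    using True s by (simp add: ennreal_mult'[symmetric] s_def mult_ac)
  also have "\<dots> = ennreal (s * unit_ball_vol (real n) * (\<mu> powr (1/2 - 1) * (1 - \<mu>) powr (real n / 2 + 1 - 1)))"
    using True by (subst powr_mult_sqrt_inverse_minus_one_pow) auto
  finally show ?thesis
    using True by simp
next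
  case False
  with assms(3,4) have "\<mu> < 0 \<or> \<mu> > 1"
    by auto
  moreover have "1 / (1 + (norm v)\<^sup>2) \<le> 1" for v :: 'a
    by (simp add: add_pos_nonneg)
  ultimately have "indicator {0..1 / (1 + (norm v)\<^sup>2)} \<mu> = (0::real)" for v :: 'a
    by (smt (verit) atLeastAtMost_iff indicator_simps(2))
  moreover have "indicator {0..1} \<mu> = (0::real)"
    using \<open>\<mu> < 0 \<or> \<mu> > 1\<close> by (auto simp: indicator_def)
  ultimately show ?thesis
    by simp
qed

lemma nn_integral_one_plus_sq_norm_powr:
  defines "n \<equiv> DIM('a::euclidean_space)"
  defines "s \<equiv> (real n + 1) / 2"
  shows "(\<integral>\<^sup>+v. (1 + (norm v)\<^sup>2) powr (-s) \<partial>(lborel::'a measure)) = pi powr s / Gamma s"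
proof -
  have s: "s > 0"
    unfolding s_def by simp
  have layer: "ennreal ((1 + (norm v)\<^sup>2) powr (-s))
      = (\<integral>\<^sup>+\<mu>. ennreal (indicator {0..1 / (1 + (norm v)\<^sup>2)} \<mu> * (s * \<mu> powr (s - 1))) \<partial>lborel)" for v :: 'a
  proof -
    have "(1 / (1 + (norm v)\<^sup>2)) powr s = (1 + (norm v)\<^sup>2) powr (-s)"
      by (simp add: powr_divide powr_minus_divide add_pos_nonneg)
    then show ?thesis
      using nn_integral_layer_powr[of "1 / (1 + (norm v)\<^sup>2)" s] s by (simp add: add_pos_nonneg)
  qed
  have "(\<integral>\<^sup>+v. (1 + (norm v)\<^sup>2) powr (-s) \<partial>(lborel::'a measure))
      = (\<integral>\<^sup>+v. \<integral>\<^sup>+\<mu>. ennreal (indicator {0..1 / (1 + (norm (v::'a))\<^sup>2)} \<mu> * (s * \<mu> powr (s - 1))) \<partial>lborel \<partial>lborel)"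
    by (simp add: layer)
  also have "\<dots> = (\<integral>\<^sup>+\<mu>. \<integral>\<^sup>+v. ennreal (indicator {0..1 / (1 + (norm (v::'a))\<^sup>2)} \<mu> * (s * \<mu> powr (s - 1))) \<partial>lborel \<partial>lborel)"
    by (rule lborel_pair.Fubini'[OF borel_measurable_layer_integrand, symmetric])
  also have "\<dots> = (\<integral>\<^sup>+\<mu>. ennreal (indicator {0..1} \<mu> * (s * unit_ball_vol (real n)
                      * (\<mu> powr (1/2 - 1) * (1 - \<mu>) powr (real n / 2 + 1 - 1)))) \<partial>lborel)"
    unfolding n_def s_def
    by (rule nn_integral_cong_AE, rule eventually_elim2[OF AE_lborel_singleton[of 0] AE_lborel_singleton[of 1]])
       (rule nn_integral_layer_integrand_slice)
  also have "\<dots> = s * unit_ball_vol (real n) * Beta (1/2) (real n / 2 + 1)"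
  proof -
    have "((\<lambda>\<mu>. \<mu> powr (1/2 - 1) * (1 - \<mu>) powr (real n / 2 + 1 - 1)) has_integral Beta (1/2) (real n / 2 + 1)) {0..1}"
      by (rule has_integral_Beta_real) auto
    from has_integral_mult_right[OF this, of "s * unit_ball_vol (real n)"]
    show ?thesis
      using s by (subst nn_integral_has_integral_lebesgue) (auto simp: unit_ball_vol_def)
  qed
  also have "\<dots> = pi powr s / Gamma s"
    using unit_ball_vol_Beta[of n] unfolding s_def by simp
  finally show ?thesis .
qed

lemma poisson_kernel_nonneg:
  assumes "y > 0"
  shows "poisson_kernel x y \<ge> 0"
  unfolding poisson_kernel_def using assms by (simp add: add_pos_nonneg)

lemma poisson_kernel_scaleR:
  fixes v :: "real^'m::finite"
  assumes y: "y > 0"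
  defines "s \<equiv> (real CARD('m) + 1) / 2"
  shows "y ^ CARD('m) * poisson_kernel (y *\<^sub>R v) y = Gamma s / pi powr s * (1 + (norm v)\<^sup>2) powr (-s)"
proof -
  have "(norm (y *\<^sub>R v))\<^sup>2 + y\<^sup>2 = y\<^sup>2 * (1 + (norm v)\<^sup>2)"
    by (simp add: power_mult_distrib distrib_left)
  then have "((norm (y *\<^sub>R v))\<^sup>2 + y\<^sup>2) powr s = (y\<^sup>2) powr s * (1 + (norm v)\<^sup>2) powr s"
    by (metis powr_mult zero_le_power2 add_nonneg_nonneg zero_le_one)
  also have "(y\<^sup>2) powr s = y ^ CARD('m) * y"
  proof -
    have "y\<^sup>2 = y powr real 2"
      using y by (simp only: powr_realpow)
    then have "(y\<^sup>2) powr s = y powr (real 2 * s)"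
      by (simp only: powr_powr)
    also have "real 2 * s = real CARD('m) + 1"
      unfolding s_def by simp
    also have "y powr (real CARD('m) + 1) = y powr real CARD('m) * y powr 1"
      by (rule powr_add)
    also have "\<dots> = y ^ CARD('m) * y"
      using y by (simp add: powr_realpow)
    finally show ?thesis .
  qed
  finally have "y ^ CARD('m) * poisson_kernel (y *\<^sub>R v) y
      = y ^ CARD('m) * (Gamma s / pi powr s * y / (y ^ CARD('m) * y * (1 + (norm v)\<^sup>2) powr s))"
    unfolding poisson_kernel_def s_def by simp
  also have "\<dots> = Gamma s / pi powr s / (1 + (norm v)\<^sup>2) powr s"
  proof -
    have "a * (c * b / (a * b * d)) = c / d" if "a > 0" "b > 0" for a b c d :: real
      using that by simp
    then show ?thesis
      using y by simp
  qed
  finally show ?thesis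
    by (simp add: powr_minus_divide)
qed

lemma nn_integral_poisson_kernel:
  fixes x :: "real^'m::finite"
  assumes y: "y > 0"
  shows "(\<integral>\<^sup>+z. poisson_kernel (x - z) y \<partial>lborel) = 1"
proof -
  define s where "s = (real CARD('m) + 1) / 2"
  have s: "s > 0"
    unfolding s_def by simp
  have measurable: "(\<lambda>z. ennreal (poisson_kernel (x - z) y)) \<in> borel_measurable borel"
    unfolding poisson_kernel_def
    by (intro measurable_compose[OF _ measurable_ennreal] borel_measurable_continuous_onI continuous_intros)
       (use y in \<open>auto simp: add_pos_nonneg\<close>)
  have "(\<integral>\<^sup>+z. poisson_kernel (x - z) y \<partial>lborel)
      = (\<integral>\<^sup>+z. poisson_kernel (x - z) y
           \<partial>density (distr lborel borel (\<lambda>v. x + (-y) *\<^sub>R v)) (\<lambda>_. ennreal (y ^ CARD('m))))"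
    using lborel_affine[of "-y" x] y by simp
  also have "\<dots> = (\<integral>\<^sup>+v. ennreal (y ^ CARD('m)) * ennreal (poisson_kernel (y *\<^sub>R (v::real^'m)) y) \<partial>lborel)"
    using y measurable by (subst nn_integral_density) (auto simp: nn_integral_distr)
  also have "\<dots> = (\<integral>\<^sup>+v. ennreal (Gamma s / pi powr s) * ennreal ((1 + (norm (v::real^'m))\<^sup>2) powr (-s)) \<partial>lborel)"
    using y s poisson_kernel_scaleR[OF y, where 'm='m] poisson_kernel_nonneg[OF y]
    by (intro nn_integral_cong) (simp add: ennreal_mult'[symmetric] s_def)
  also have "\<dots> = ennreal (Gamma s / pi powr s) * ennreal (pi powr s / Gamma s)"
    using nn_integral_one_plus_sq_norm_powr[where 'a="real^'m"] unfolding s_def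
    by (simp add: nn_integral_cmult)
  also have "\<dots> = 1"
    using s by (simp add: ennreal_mult'[symmetric] less_imp_neq[OF Gamma_real_pos[OF s], symmetric])
  finally show ?thesis .
qed

lemma norm_harmonic_ext_le_1:
  fixes u :: "real^'m::finite \<Rightarrow> real^'l::finite"
  assumes y: "y > 0" and u: "u \<in> borel_measurable lborel" and sphere: "AE z in lborel. norm (u z) = 1"
  shows "norm (harmonic_ext u x y) \<le> 1"
proof -
  have [measurable]: "u \<in> borel_measurable lborel"
    by (rule u)
  have [measurable]: "(\<lambda>z. poisson_kernel (x - z) y) \<in> borel_measurable lborel"
    unfolding poisson_kernel_def measurable_lborel2
    by (intro borel_measurable_continuous_onI continuous_intros)
       (use y in \<open>auto simp: add_pos_nonneg\<close>)
  have "norm (harmonic_ext u x y) \<le> (\<integral>z. norm (poisson_kernel (x - z) y *\<^sub>R u z) \<partial>lborel)"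
    unfolding harmonic_ext_def by (rule integral_norm_bound)
  also have "\<dots> = (\<integral>z. poisson_kernel (x - z) y \<partial>lborel)"
    using sphere by (intro integral_cong_AE) (auto simp: poisson_kernel_nonneg[OF y])
  also have "\<dots> = enn2real (\<integral>\<^sup>+z. poisson_kernel (x - z) y \<partial>lborel)"
    by (rule integral_eq_nn_integral) (auto simp: poisson_kernel_nonneg[OF y])
  also have "\<dots> = 1"
    using nn_integral_poisson_kernel[OF y] by simp
  finally show ?thesis .
qed

text \<open>The barrier is h = q^(-1/4) (1 + 62 t / q) with q = 6 t + y^2; the constants make h_t - h_yy a
  positive multiple of a positive definite quadratic form in t and y^2.\<close>

definition barrier_base :: "real \<Rightarrow> real \<Rightarrow> real" where
  "barrier_base y t = 6 * t + y\<^sup>2"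

definition barrier_root :: "real \<Rightarrow> real \<Rightarrow> real" where
  "barrier_root y t = barrier_base y t powr (-1/4)"

definition barrier :: "real \<Rightarrow> real \<Rightarrow> real" where
  "barrier y t = barrier_root y t + 62 * t * barrier_root y t / barrier_base y t"

definition barrier_dy :: "real \<Rightarrow> real \<Rightarrow> real" where
  "barrier_dy y t = -(1/2) * y * barrier_root y t / barrier_base y t
     - 155 * t * y * barrier_root y t / (barrier_base y t)\<^sup>2"

definition barrier_dyy :: "real \<Rightarrow> real \<Rightarrow> real" where
  "barrier_dyy y t = -(1/2) * barrier_root y t / barrier_base y t
     + (5/4) * y\<^sup>2 * barrier_root y t / (barrier_base y t)\<^sup>2
     - 155 * t * barrier_root y t / (barrier_base y t)\<^sup>2
     + (1395/2) * t * y\<^sup>2 * barrier_root y t / (barrier_base y t) ^ 3"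

definition barrier_dt :: "real \<Rightarrow> real \<Rightarrow> real" where
  "barrier_dt y t = (121/2) * barrier_root y t / barrier_base y t
     - 465 * t * barrier_root y t / (barrier_base y t)\<^sup>2"

lemma barrier_base_pos: "t > 0 \<Longrightarrow> barrier_base y t > 0"
  unfolding barrier_base_def by (simp add: add_pos_nonneg)

lemma barrier_root_pos: "t > 0 \<Longrightarrow> barrier_root y t > 0"
  unfolding barrier_root_def using barrier_base_pos[of t y] by simp

lemma barrier_ge_root: "t > 0 \<Longrightarrow> barrier y t \<ge> barrier_root y t"
  unfolding barrier_def using barrier_root_pos[of t y] barrier_base_pos[of t y] by simp

lemma barrier_dy_0 [simp]: "barrier_dy 0 t = 0"
  unfolding barrier_dy_def by simp

lemma has_real_derivative_powr_quotient:
  fixes g :: "real \<Rightarrow> real"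
  assumes "(g has_real_derivative m) (at x)" "g x > 0"
  shows "((\<lambda>x. g x powr p) has_real_derivative p * m * (g x powr p / g x)) (at x)"
proof -
  have "((\<lambda>x. g x powr p) has_real_derivative p * g x powr (p - of_nat 1) * m) (at x)"
    by (rule DERIV_fun_powr[OF assms])
  moreover have "g x powr (p - of_nat 1) = g x powr p / g x"
    using assms(2) by (simp add: powr_diff)
  ultimately show ?thesis
    by (simp add: algebra_simps)
qed

lemma barrier_base_has_derivative_y: "((\<lambda>y. barrier_base y t) has_real_derivative 2 * y) (at y)"
  unfolding barrier_base_def by (auto intro!: derivative_eq_intros)

lemma barrier_base_has_derivative_t: "((\<lambda>t. barrier_base y t) has_real_derivative 6) (at t)"
  unfolding barrier_base_def by (auto intro!: derivative_eq_intros)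

lemma barrier_root_has_derivative_y:
  "t > 0 \<Longrightarrow> ((\<lambda>y. barrier_root y t) has_real_derivative -(1/2) * y * (barrier_root y t / barrier_base y t)) (at y)"
  using has_real_derivative_powr_quotient[OF barrier_base_has_derivative_y barrier_base_pos, where p="-1/4"]
  unfolding barrier_root_def by (simp add: algebra_simps)

lemma barrier_root_has_derivative_t:
  "t > 0 \<Longrightarrow> ((\<lambda>t. barrier_root y t) has_real_derivative -(3/2) * (barrier_root y t / barrier_base y t)) (at t)"
  using has_real_derivative_powr_quotient[OF barrier_base_has_derivative_t barrier_base_pos, where p="-1/4"]
  unfolding barrier_root_def by (simp add: algebra_simps)

lemma barrier_has_derivative_y:
  assumes t: "t > 0"
  shows "((\<lambda>y. barrier y t) has_real_derivative barrier_dy y t) (at y)"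
  unfolding barrier_def
  using barrier_base_pos[OF t, of y]
  by (auto intro!: derivative_eq_intros barrier_root_has_derivative_y[OF t] barrier_base_has_derivative_y
      simp: barrier_dy_def field_simps power2_eq_square)

lemma barrier_dy_has_derivative_y:
  assumes t: "t > 0"
  shows "((\<lambda>y. barrier_dy y t) has_real_derivative barrier_dyy y t) (at y)"
  unfolding barrier_dy_def
  using barrier_base_pos[OF t, of y]
  by (auto intro!: derivative_eq_intros barrier_root_has_derivative_y[OF t] barrier_base_has_derivative_y
      simp: barrier_dyy_def field_simps power2_eq_square power3_eq_cube)

lemma barrier_has_derivative_t:
  assumes t: "t > 0"
  shows "((\<lambda>t. barrier y t) has_real_derivative barrier_dt y t) (at t)"
  unfolding barrier_def
  using barrier_base_pos[OF t, of y]
  by (auto intro!: derivative_eq_intros barrier_root_has_derivative_t[OF t] barrier_base_has_derivative_t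
      simp: barrier_dt_def field_simps power2_eq_square)

lemma barrier_supersolution:
  assumes t: "t > 0"
  shows "barrier_dyy y t \<le> barrier_dt y t"
proof -
  define q where "q = barrier_base y t"
  define R where "R = barrier_root y t"
  have "q > 0" "R > 0"
    unfolding q_def R_def using barrier_base_pos[OF t] barrier_root_pos[OF t] by auto
  have "barrier_dt y t - barrier_dyy y t
      = R / q ^ 3 * (61 * q\<^sup>2 - 310 * t * q - (5/4) * y\<^sup>2 * q - (1395/2) * t * y\<^sup>2)"
    unfolding barrier_dt_def barrier_dyy_def q_def[symmetric] R_def[symmetric] using \<open>q > 0\<close>
    by (simp add: field_simps power2_eq_square power3_eq_cube)
  also have "61 * q\<^sup>2 - 310 * t * q - (5/4) * y\<^sup>2 * q - (1395/2) * t * y\<^sup>2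
      = (672 * t - 283 * y\<^sup>2)\<^sup>2 / 1344 + (215/1344) * (y\<^sup>2)\<^sup>2"
    unfolding q_def barrier_base_def by (simp add: field_simps power2_eq_square)
  finally show ?thesis
    using \<open>q > 0\<close> \<open>R > 0\<close> by (smt (verit) divide_nonneg_pos mult_nonneg_nonneg zero_le_power2 zero_less_power)
qed

lemma continuous_on_barrier: "continuous_on {z. snd z > 0} (\<lambda>z. barrier (fst z) (snd z))"
proof -
  have pos: "6 * t + y\<^sup>2 \<noteq> 0" if "t > 0" for y t :: real
    using barrier_base_pos[OF that, of y] by (simp add: barrier_base_def)
  show ?thesis
    unfolding barrier_def barrier_root_def barrier_base_def
    by (intro continuous_intros) (auto dest: pos)
qed

definition penalty :: "real^'m::finite \<Rightarrow> real \<Rightarrow> real \<Rightarrow> real" where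
  "penalty x y t = barrier y t + inner x x + y\<^sup>2 + (2 * real CARD('m) + 3) * t"

definition penalized :: "real \<Rightarrow> (real^'m::finite \<Rightarrow> real \<Rightarrow> real \<Rightarrow> 'b::real_normed_vector)
    \<Rightarrow> real^'m \<Rightarrow> real \<Rightarrow> real \<Rightarrow> real" where
  "penalized \<delta> U x y t = (norm (U x y t))\<^sup>2 - 1 - \<delta> * penalty x y t"

lemma penalty_ge:
  fixes x :: "real^'m::finite"
  assumes "t > 0"
  shows "penalty x y t \<ge> inner x x + y\<^sup>2 + barrier_root y t"
proof -
  have "(2 * real CARD('m) + 3) * t \<ge> 0"
    using assms by simp
  then show ?thesis
    unfolding penalty_def using barrier_ge_root[OF assms, of y] by simp
qed

lemma penalty_pos:
  assumes "t > 0"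
  shows "penalty x y t > 0"
  using penalty_ge[OF assms, of x y] barrier_root_pos[OF assms, of y]
  by (smt (verit) inner_ge_zero zero_le_power2)

lemma penalty_lessD:
  assumes t: "t > 0" and less: "penalty x y t < C"
  shows "inner x x + y\<^sup>2 < C" "C powr -4 < barrier_base y t"
proof -
  have R: "barrier_root y t > 0"
    using barrier_root_pos[OF t] .
  with penalty_ge[OF t, of x y] less show "inner x x + y\<^sup>2 < C"
    by simp
  have "barrier_root y t < C"
    using penalty_ge[OF t, of x y] less by (smt (verit) inner_ge_zero zero_le_power2)
  moreover have "C > 0"
    using R calculation by linarith
  ultimately have C: "barrier_base y t powr (-1/4) < (C powr -4) powr (-1/4)"
    unfolding barrier_root_def by (simp add: powr_powr)
  show "C powr -4 < barrier_base y t"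
  proof (rule ccontr)
    assume "\<not> C powr -4 < barrier_base y t"
    then have "(C powr -4) powr (-1/4) \<le> barrier_base y t powr (-1/4)"
      using barrier_base_pos[OF t] by (intro powr_mono2') auto
    with C show False
      by linarith
  qed
qed

lemma penalty_has_derivative_x:
  "((\<lambda>s. penalty (x + s *\<^sub>R a) y t) has_real_derivative 2 * inner (x + s *\<^sub>R a) a) (at s)"
  unfolding penalty_def
  by (auto intro!: derivative_eq_intros simp: inner_add_left inner_add_right inner_commute)

lemma penalty_has_derivative_y:
  assumes "t > 0"
  shows "((\<lambda>y. penalty x y t) has_real_derivative barrier_dy y t + 2 * y) (at y)"
  unfolding penalty_def
  by (auto intro!: derivative_eq_intros barrier_has_derivative_y[OF assms])

lemma penalty_has_derivative_t:
  fixes x :: "real^'m::finite"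
  assumes "t > 0"
  shows "((\<lambda>t. penalty x y t) has_real_derivative barrier_dt y t + (2 * real CARD('m) + 3)) (at t)"
  unfolding penalty_def
  by (auto intro!: derivative_eq_intros barrier_has_derivative_t[OF assms])

lemma continuous_on_penalized:
  fixes U :: "real^'m::finite \<Rightarrow> real \<Rightarrow> real \<Rightarrow> 'b::real_normed_vector"
  assumes "continuous_on {((x, y), t). y \<ge> 0 \<and> t > 0} (uncurry3 U)"
  shows "continuous_on {((x, y), t). y \<ge> 0 \<and> t > 0} (\<lambda>((x, y), t). penalized \<delta> U x y t)"
proof -
  have "(\<lambda>((x, y), t). penalized \<delta> U x y t) = (\<lambda>p. (norm (uncurry3 U p))\<^sup>2 - 1 - \<delta> *
      (barrier (snd (fst p)) (snd p) + inner (fst (fst p)) (fst (fst p)) + (snd (fst p))\<^sup>2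
        + (2 * real CARD('m) + 3) * snd p))"
    by (auto simp: fun_eq_iff penalized_def penalty_def)
  moreover have "continuous_on {((x, y), t). y \<ge> 0 \<and> t > 0} (\<lambda>p. barrier (snd (fst p)) (snd p))"
    by (rule continuous_on_compose2[OF continuous_on_barrier, of _ "\<lambda>p. (snd (fst p), snd p)", simplified])
       (auto intro!: continuous_intros)
  ultimately show ?thesis
    using assms by (auto intro!: continuous_intros)
qed

lemma norm_gt_1_if_penalized_pos:
  assumes "0 < penalized \<delta> U x y t" "\<delta> \<ge> 0" "t > 0"
  shows "1 < norm (U x y t)"
proof -
  have "0 \<le> \<delta> * penalty x y t"
    using assms penalty_pos[of t x y] by simp
  with assms(1) have "1 < (norm (U x y t))\<^sup>2"
    unfolding penalized_def by simp
  then show ?thesis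
    by (smt (verit) norm_ge_zero power_le_one)
qed

lemma penalized_pos_for_small_weight:
  assumes "1 < norm (U x y t)" "t > 0"
  obtains \<delta> where "\<delta> > 0" "0 < penalized \<delta> U x y t"
proof
  define \<delta> where "\<delta> = ((norm (U x y t))\<^sup>2 - 1) / (2 * penalty x y t)"
  have "1 < (norm (U x y t))\<^sup>2"
    using assms(1) by (simp add: one_less_power)
  with penalty_pos[OF assms(2), of x y] show "\<delta> > 0"
    unfolding \<delta>_def by simp
  have "\<delta> * penalty x y t = ((norm (U x y t))\<^sup>2 - 1) / 2"
    unfolding \<delta>_def using penalty_pos[OF assms(2), of x y] by simp
  with \<open>1 < (norm (U x y t))\<^sup>2\<close> show "0 < penalized \<delta> U x y t"
    unfolding penalized_def by simp
qed

locale penalized_interior_max =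
  fixes U :: "real^'m::finite \<Rightarrow> real \<Rightarrow> real \<Rightarrow> 'b::real_inner"
    and \<delta> y0 t0 :: real and x0 :: "real^'m"
  assumes smooth: "smooth_on {((x, y), t). y > 0 \<and> t > 0} (uncurry3 U)"
    and y0: "y0 > 0" and t0: "t0 > 0"
    and max: "\<And>x y t. y > 0 \<Longrightarrow> 0 < t \<Longrightarrow> t \<le> t0 \<Longrightarrow> penalized \<delta> U x y t \<le> penalized \<delta> U x0 y0 t0"
begin

lemma differentiable_at: "y > 0 \<Longrightarrow> t > 0 \<Longrightarrow> higher_dir (uncurry3 U) vs differentiable (at ((x, y), t))"
  using smooth_on_differentiable_at[OF smooth] by simp

lemma max_norm_minus_penalty:
  "y > 0 \<Longrightarrow> 0 < t \<Longrightarrow> t \<le> t0 \<Longrightarrow>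
    (norm (uncurry3 U ((x, y), t)))\<^sup>2 - \<delta> * penalty x y t \<le> (norm (U x0 y0 t0))\<^sup>2 - \<delta> * penalty x0 y0 t0"
  using max unfolding penalized_def by simp

lemma second_derivative_x_le:
  "2 * inner (U x0 y0 t0) (higher_dir (uncurry3 U) [e_x i, e_x i] ((x0, y0), t0)) \<le> 2 * \<delta>"
proof -
  have line: "((x0, y0), t0) + s *\<^sub>R e_x i = ((x0 + s *\<^sub>R axis i 1, y0), t0)" for s
    by (simp add: e_x_def)
  have "2 * inner (uncurry3 U ((x0, y0), t0)) (higher_dir (uncurry3 U) [e_x i, e_x i] ((x0, y0), t0)) \<le> 2 * \<delta>"
  proof (rule second_derivative_along_line_at_max[OF zero_less_one,
        where P = "\<lambda>s. \<delta> * penalty (x0 + s *\<^sub>R axis i 1) y0 t0"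
          and P' = "\<lambda>s. \<delta> * (2 * inner (x0 + s *\<^sub>R axis i 1) (axis i 1))"])
    show "uncurry3 U differentiable (at (((x0, y0), t0) + s *\<^sub>R e_x i))" for s
      unfolding line using differentiable_at[OF y0 t0, of "[]"] by simp
    show "higher_dir (uncurry3 U) [e_x i] differentiable (at ((x0, y0), t0))"
      by (rule differentiable_at[OF y0 t0])
    show "((\<lambda>s. \<delta> * penalty (x0 + s *\<^sub>R axis i 1) y0 t0) has_real_derivative
        \<delta> * (2 * inner (x0 + s *\<^sub>R axis i 1) (axis i 1))) (at s)" for s
      by (intro DERIV_cmult penalty_has_derivative_x)
    show "((\<lambda>s. \<delta> * (2 * inner (x0 + s *\<^sub>R axis i 1) (axis i 1))) has_real_derivative 2 * \<delta>) (at 0)"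
      by (auto intro!: derivative_eq_intros simp: inner_add_left)
    show "(norm (uncurry3 U (((x0, y0), t0) + s *\<^sub>R e_x i)))\<^sup>2 - \<delta> * penalty (x0 + s *\<^sub>R axis i 1) y0 t0
        \<le> (norm (uncurry3 U ((x0, y0), t0)))\<^sup>2 - \<delta> * penalty (x0 + 0 *\<^sub>R axis i 1) y0 t0" for s
      unfolding line using max_norm_minus_penalty y0 t0 by simp
  qed
  then show ?thesis
    by simp
qed

lemma second_derivative_y_le:
  "2 * inner (U x0 y0 t0) (higher_dir (uncurry3 U) [e_y, e_y] ((x0, y0), t0)) \<le> \<delta> * (barrier_dyy y0 t0 + 2)"
proof -
  have line: "((x0, y0), t0) + s *\<^sub>R e_y = ((x0, y0 + s), t0)" for s
    by (simp add: e_y_def)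
  have "2 * inner (uncurry3 U ((x0, y0), t0)) (higher_dir (uncurry3 U) [e_y, e_y] ((x0, y0), t0))
      \<le> \<delta> * (barrier_dyy y0 t0 + 2)"
  proof (rule second_derivative_along_line_at_max[OF y0,
        where P = "\<lambda>s. \<delta> * penalty x0 (y0 + s) t0"
          and P' = "\<lambda>s. \<delta> * (barrier_dy (y0 + s) t0 + 2 * (y0 + s))"])
    show "uncurry3 U differentiable (at (((x0, y0), t0) + s *\<^sub>R e_y))" if "\<bar>s\<bar> < y0" for s
      unfolding line using differentiable_at[OF _ t0, of "y0 + s" "[]"] that by simp
    show "higher_dir (uncurry3 U) [e_y] differentiable (at ((x0, y0), t0))"
      by (rule differentiable_at[OF y0 t0])
    show "((\<lambda>s. \<delta> * penalty x0 (y0 + s) t0) has_real_derivative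
        \<delta> * (barrier_dy (y0 + s) t0 + 2 * (y0 + s))) (at s)" for s
      by (intro DERIV_cmult has_real_derivative_shift penalty_has_derivative_y[OF t0])
    show "((\<lambda>s. \<delta> * (barrier_dy (y0 + s) t0 + 2 * (y0 + s))) has_real_derivative
        \<delta> * (barrier_dyy y0 t0 + 2)) (at 0)"
      using has_real_derivative_shift[of "\<lambda>y. barrier_dy y t0" _ y0 0] barrier_dy_has_derivative_y[OF t0, of y0]
      by (auto intro!: DERIV_cmult derivative_eq_intros)
    show "(norm (uncurry3 U (((x0, y0), t0) + s *\<^sub>R e_y)))\<^sup>2 - \<delta> * penalty x0 (y0 + s) t0
        \<le> (norm (uncurry3 U ((x0, y0), t0)))\<^sup>2 - \<delta> * penalty x0 (y0 + 0) t0" if "\<bar>s\<bar> < y0" for s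
      unfolding line using max_norm_minus_penalty that t0 by simp
  qed
  then show ?thesis
    by simp
qed

lemma derivative_t_ge:
  "\<delta> * (barrier_dt y0 t0 + (2 * real CARD('m) + 3)) \<le> 2 * inner (U x0 y0 t0) (higher_dir (uncurry3 U) [e_t] ((x0, y0), t0))"
proof -
  have line: "((x0, y0), t0) + s *\<^sub>R e_t = ((x0, y0), t0 + s)" for s
    by (simp add: e_t_def)
  have "\<delta> * (barrier_dt y0 t0 + (2 * real CARD('m) + 3))
      \<le> 2 * inner (uncurry3 U ((x0, y0), t0)) (higher_dir (uncurry3 U) [e_t] ((x0, y0), t0))"
  proof (rule derivative_along_line_at_left_max[OF t0, where P = "\<lambda>s. \<delta> * penalty x0 y0 (t0 + s)"])
    show "uncurry3 U differentiable (at ((x0, y0), t0))"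
      using differentiable_at[OF y0 t0, of "[]"] by simp
    show "((\<lambda>s. \<delta> * penalty x0 y0 (t0 + s)) has_real_derivative
        \<delta> * (barrier_dt y0 t0 + (2 * real CARD('m) + 3))) (at 0)"
      using has_real_derivative_shift[of "\<lambda>t. penalty x0 y0 t" _ t0 0] penalty_has_derivative_t[OF t0, of x0 y0]
      by (auto intro!: DERIV_cmult)
    show "(norm (uncurry3 U (((x0, y0), t0) + s *\<^sub>R e_t)))\<^sup>2 - \<delta> * penalty x0 y0 (t0 + s)
        \<le> (norm (uncurry3 U ((x0, y0), t0)))\<^sup>2 - \<delta> * penalty x0 y0 (t0 + 0)" if "-t0 < s" "s \<le> 0" for s
      unfolding line using max_norm_minus_penalty that y0 by simp
  qed
  then show ?thesis
    by simp
qed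

lemma not_heat_solution:
  assumes "\<delta> > 0"
  shows "dt U x0 y0 t0 \<noteq> laplacian_xy U x0 y0 t0"
proof
  let ?D = "\<lambda>vs. higher_dir (uncurry3 U) vs ((x0, y0), t0)"
  assume "dt U x0 y0 t0 = laplacian_xy U x0 y0 t0"
  then have "2 * inner (U x0 y0 t0) (?D [e_t])
      = (\<Sum>i\<in>UNIV. 2 * inner (U x0 y0 t0) (?D [e_x i, e_x i])) + 2 * inner (U x0 y0 t0) (?D [e_y, e_y])"
    unfolding dt_def laplacian_xy_def by (simp add: inner_add_right inner_sum_right sum_distrib_left)
  also have "\<dots> \<le> (\<Sum>i\<in>(UNIV::'m set). 2 * \<delta>) + \<delta> * (barrier_dyy y0 t0 + 2)"
    by (intro add_mono sum_mono second_derivative_x_le second_derivative_y_le)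
  finally have "\<delta> * (barrier_dt y0 t0 + 1) \<le> \<delta> * barrier_dyy y0 t0"
    using derivative_t_ge by (simp add: algebra_simps)
  with assms barrier_supersolution[OF t0, of y0] show False
    by simp
qed

end

lemma continuous_on_vertical_ray:
  assumes "continuous_on {((x, y), t). y \<ge> 0 \<and> t > 0} (uncurry3 U)" "t > 0"
  shows "continuous_on {0..} (\<lambda>y. U x y t)"
proof -
  have "continuous_on {0..} (\<lambda>y. uncurry3 U ((x, y), t))"
    by (rule continuous_on_compose2[OF assms(1)]) (use assms(2) in \<open>auto intro!: continuous_intros\<close>)
  then show ?thesis
    by simp
qed

lemma norm_le_on_boundary:
  fixes U :: "real^'m::finite \<Rightarrow> real \<Rightarrow> real \<Rightarrow> 'b::real_normed_vector"
  assumes cont: "continuous_on {((x, y), t). y \<ge> 0 \<and> t > 0} (uncurry3 U)"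
    and bound: "\<And>x y t. y > 0 \<Longrightarrow> t > 0 \<Longrightarrow> norm (U x y t) \<le> B"
    and "y \<ge> 0" "t > 0"
  shows "norm (U x y t) \<le> B"
proof (cases "y = 0")
  case True
  have "((\<lambda>y. norm (U x y t)) \<longlongrightarrow> norm (U x 0 t)) (at 0 within {0<..})"
    using continuous_on_vertical_ray[OF cont \<open>t > 0\<close>, of x] unfolding continuous_on_def
    by (auto intro!: tendsto_norm intro: tendsto_within_subset)
  moreover have "eventually (\<lambda>y. norm (U x y t) \<le> B) (at 0 within {0<..})"
    using bound \<open>t > 0\<close> by (auto simp: eventually_at_filter)
  ultimately have "norm (U x 0 t) \<le> B"
    by (rule tendsto_upperbound) simp
  with True show ?thesis
    by simp
qed (use assms in auto)

lemma penalized_has_derivative_y: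
  fixes U :: "real^'m::finite \<Rightarrow> real \<Rightarrow> real \<Rightarrow> 'b::real_inner"
  assumes smooth: "smooth_on {((x, y), t). y > 0 \<and> t > 0} (uncurry3 U)"
    and "y > 0" "t > 0"
  shows "((\<lambda>y. penalized \<delta> U x y t) has_real_derivative
           2 * inner (U x y t) (dy U x y t) - \<delta> * (barrier_dy y t + 2 * y)) (at y)"
proof -
  have "uncurry3 U differentiable (at (((x, 0), t) + y *\<^sub>R e_y))"
    using smooth_on_differentiable_at[OF smooth, of _ "[]"] assms(2,3) by (simp add: e_y_def)
  from has_vector_derivative_along_line[OF this]
  have "((\<lambda>y. U x y t) has_vector_derivative dy U x y t) (at y)"
    by (simp add: e_y_def dy_def)
  then have "((\<lambda>y. penalized \<delta> U x y t) has_real_derivative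
      (2 * inner (U x y t) (dy U x y t) - 0) - \<delta> * (barrier_dy y t + 2 * y)) (at y)"
    unfolding penalized_def
    by (intro DERIV_diff DERIV_const DERIV_cmult has_real_derivative_power2_norm penalty_has_derivative_y assms)
  then show ?thesis
    by simp
qed

lemma penalized_increases_off_boundary:
  fixes U :: "real^'m::finite \<Rightarrow> real \<Rightarrow> real \<Rightarrow> 'b::real_inner"
  assumes smooth: "smooth_on {((x, y), t). y > 0 \<and> t > 0} (uncurry3 U)"
    and cont: "continuous_on {((x, y), t). y \<ge> 0 \<and> t > 0} (uncurry3 U)"
    and t0: "t0 > 0"
    and lim: "((\<lambda>y. dy U x0 y t0) \<longlongrightarrow> V) (at_right 0)"
    and outward: "inner (U x0 0 t0) V > 0"
  obtains y where "y > 0" "penalized \<delta> U x0 0 t0 < penalized \<delta> U x0 y t0"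
proof -
  define g' where "g' y = 2 * inner (U x0 y t0) (dy U x0 y t0) - \<delta> * (barrier_dy y t0 + 2 * y)" for y
  note U_cont = continuous_on_vertical_ray[OF cont t0, of x0]
  have "((\<lambda>y. U x0 y t0) \<longlongrightarrow> U x0 0 t0) (at_right 0)"
    using U_cont unfolding continuous_on_def by (auto intro: tendsto_within_subset)
  moreover have "((\<lambda>y. barrier_dy y t0) \<longlongrightarrow> barrier_dy 0 t0) (at_right 0)"
    using DERIV_isCont[OF barrier_dy_has_derivative_y[OF t0]] unfolding isCont_def
    by (rule tendsto_within_subset) simp
  ultimately have "(g' \<longlongrightarrow> 2 * inner (U x0 0 t0) V - \<delta> * (barrier_dy 0 t0 + 2 * 0)) (at_right 0)"
    unfolding g'_def by (intro tendsto_intros lim)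
  moreover have "2 * inner (U x0 0 t0) V - \<delta> * (barrier_dy 0 t0 + 2 * 0) > 0"
    using outward by simp
  ultimately have "eventually (\<lambda>y. g' y > 0) (at_right 0)"
    by (rule order_tendstoD)
  then obtain b where b: "b > 0" "\<And>y. 0 < y \<Longrightarrow> y < b \<Longrightarrow> g' y > 0"
    unfolding eventually_at_right_field by auto
  have "penalized \<delta> U x0 0 t0 < penalized \<delta> U x0 (b/2) t0"
  proof (rule DERIV_pos_imp_increasing_open[of 0 "b/2" "\<lambda>y. penalized \<delta> U x0 y t0"])
    show "\<exists>l. ((\<lambda>y. penalized \<delta> U x0 y t0) has_real_derivative l) (at y) \<and> l > 0"
      if "0 < y" "y < b/2" for y
      using penalized_has_derivative_y[OF smooth that(1) t0, where \<delta>=\<delta> and x=x0] b(2)[of y] that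
      unfolding g'_def by auto
    have "continuous_on {0..b/2} (\<lambda>y. barrier y t0)"
      by (intro continuous_at_imp_continuous_on ballI DERIV_isCont[OF barrier_has_derivative_y[OF t0]])
    then show "continuous_on {0..b/2} (\<lambda>y. penalized \<delta> U x0 y t0)"
      unfolding penalized_def penalty_def
      by (intro continuous_intros continuous_on_subset[OF U_cont]) auto
  qed (use b in simp)
  with b show ?thesis
    by (intro that[of "b/2"]) auto
qed

lemma penalized_superlevel_bounds:
  fixes U :: "real^'m::finite \<Rightarrow> real \<Rightarrow> real \<Rightarrow> 'b::real_normed_vector"
  assumes "\<delta> > 0" "t > 0" "0 < \<mu>" "\<mu> \<le> penalized \<delta> U x y t" "norm (U x y t) \<le> B"
  shows "inner x x + y\<^sup>2 < B\<^sup>2 / \<delta>" "(B\<^sup>2 / \<delta>) powr -4 < barrier_base y t"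
proof -
  have "(norm (U x y t))\<^sup>2 \<le> B\<^sup>2"
    using assms(5) norm_ge_zero power_mono by blast
  with assms(3,4) have "\<delta> * penalty x y t < B\<^sup>2"
    unfolding penalized_def by simp
  then have "penalty x y t < B\<^sup>2 / \<delta>"
    using assms(1) by (simp add: field_simps)
  from penalty_lessD[OF assms(2) this] show "inner x x + y\<^sup>2 < B\<^sup>2 / \<delta>" "(B\<^sup>2 / \<delta>) powr -4 < barrier_base y t"
    by auto
qed

lemma penalized_superlevel_away_from_boundary:
  fixes U :: "real^'m::finite \<Rightarrow> real \<Rightarrow> real \<Rightarrow> 'b::real_normed_vector"
  assumes "\<delta> > 0" "t > 0" "0 < \<mu>" "\<mu> \<le> penalized \<delta> U x y t" "norm (U x y t) \<le> B" "y \<ge> 0"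
    and small: "12 * t < (B\<^sup>2 / \<delta>) powr -4"
  shows "sqrt ((B\<^sup>2 / \<delta>) powr -4 / 2) < y"
proof -
  have "(B\<^sup>2 / \<delta>) powr -4 < 6 * t + y\<^sup>2"
    using penalized_superlevel_bounds(2)[OF assms(1-5)] by (simp add: barrier_base_def)
  with small have "(B\<^sup>2 / \<delta>) powr -4 / 2 < y\<^sup>2"
    by simp
  then show ?thesis
    by (rule real_less_lsqrt[OF \<open>y \<ge> 0\<close>])
qed

lemma initial_values_attained_uniformly:
  fixes U :: "real^'m::finite \<Rightarrow> real \<Rightarrow> real \<Rightarrow> 'b::real_normed_vector"
  assumes cont: "continuous_on {((x, y), t). y > 0 \<and> t \<ge> 0} (uncurry3 U)"
    and "a > 0" "e > 0"
  obtains d where "d > 0"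
    "\<And>x y t. inner x x + y\<^sup>2 \<le> C \<Longrightarrow> a \<le> y \<Longrightarrow> 0 \<le> t \<Longrightarrow> t < d \<Longrightarrow> dist (U x y t) (U x y 0) < e"
proof -
  define K where "K = {((x::real^'m, y::real), t::real). inner x x + y\<^sup>2 \<le> C \<and> a \<le> y \<and> 0 \<le> t \<and> t \<le> 1}"
  have "K \<subseteq> {((x, y), t). y > 0 \<and> t \<ge> 0}"
    unfolding K_def using \<open>a > 0\<close> by auto
  with cont have "uniformly_continuous_on K (uncurry3 U)"
    unfolding K_def by (intro compact_uniformly_continuous compact_cylinder) (auto intro: continuous_on_subset)
  with \<open>e > 0\<close> obtain d where d: "d > 0"
    and uc: "\<And>p p'. p \<in> K \<Longrightarrow> p' \<in> K \<Longrightarrow> dist p' p < d \<Longrightarrow> dist (uncurry3 U p') (uncurry3 U p) < e"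
    unfolding uniformly_continuous_on_def by metis
  show ?thesis
  proof (rule that[of "min 1 d"])
    show "dist (U x y t) (U x y 0) < e"
      if "inner x x + y\<^sup>2 \<le> C" "a \<le> y" "0 \<le> t" "t < min 1 d" for x y t
      using uc[of "((x, y), 0)" "((x, y), t)"] that unfolding K_def by (simp add: dist_Pair_Pair)
  qed (use d in simp)
qed

lemma penalized_less_near_initial_time:
  fixes U :: "real^'m::finite \<Rightarrow> real \<Rightarrow> real \<Rightarrow> 'b::real_normed_vector"
  assumes cont: "continuous_on {((x, y), t). y > 0 \<and> t \<ge> 0} (uncurry3 U)"
    and init: "\<And>x y. y > 0 \<Longrightarrow> norm (U x y 0) \<le> 1"
    and bound: "\<And>x y t. y \<ge> 0 \<Longrightarrow> t > 0 \<Longrightarrow> norm (U x y t) \<le> B"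
    and B: "B > 0" and \<delta>: "\<delta> > 0" and \<mu>: "\<mu> > 0"
  obtains \<tau> where "\<tau> > 0" "\<And>x y t. y \<ge> 0 \<Longrightarrow> 0 < t \<Longrightarrow> t < \<tau> \<Longrightarrow> penalized \<delta> U x y t < \<mu>"
proof -
  define \<sigma> where "\<sigma> = (B\<^sup>2 / \<delta>) powr -4"
  have "\<sigma> > 0"
    using B \<delta> unfolding \<sigma>_def by simp
  moreover have "\<mu> / (B + 1) > 0"
    using B \<mu> by simp
  ultimately obtain d where d: "d > 0" and close: "\<And>x y t. inner x x + y\<^sup>2 \<le> B\<^sup>2 / \<delta> \<Longrightarrow> sqrt (\<sigma> / 2) \<le> y
      \<Longrightarrow> 0 \<le> t \<Longrightarrow> t < d \<Longrightarrow> dist (U x y t) (U x y 0) < \<mu> / (B + 1)"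
    using initial_values_attained_uniformly[OF cont, where C = "B\<^sup>2 / \<delta>"] by (metis real_sqrt_gt_0_iff half_gt_zero)
  have "penalized \<delta> U x y t < \<mu>" if "y \<ge> 0" "0 < t" "t < min (\<sigma> / 12) d" for x y t
  proof (rule ccontr)
    assume "\<not> penalized \<delta> U x y t < \<mu>"
    then have \<mu>_le: "\<mu> \<le> penalized \<delta> U x y t"
      by simp
    note bounds = \<delta> \<open>0 < t\<close> \<mu> \<mu>_le bound[OF that(1,2)]
    have "12 * t < \<sigma>"
      using that by simp
    then have "sqrt (\<sigma> / 2) < y"
      using penalized_superlevel_away_from_boundary[OF bounds \<open>y \<ge> 0\<close>] unfolding \<sigma>_def by blast
    then have "y > 0"
      using real_sqrt_gt_zero[of "\<sigma> / 2"] \<open>\<sigma> > 0\<close> by linarith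
    have "inner x x + y\<^sup>2 \<le> B\<^sup>2 / \<delta>"
      using penalized_superlevel_bounds(1)[OF bounds] by linarith
    with \<open>sqrt (\<sigma> / 2) < y\<close> that have "dist (U x y t) (U x y 0) < \<mu> / (B + 1)"
      by (intro close) auto
    from power2_norm_minus_one_less[OF init[OF \<open>y > 0\<close>] bound[OF that(1,2)] this]
    have "(norm (U x y t))\<^sup>2 - 1 < \<mu>"
      using B by simp
    moreover have "\<delta> * penalty x y t > 0"
      using penalty_pos[OF \<open>0 < t\<close>, of x y] \<delta> by simp
    ultimately show False
      using \<mu>_le unfolding penalized_def by linarith
  qed
  moreover have "min (\<sigma> / 12) d > 0"
    using \<open>\<sigma> > 0\<close> d by simp
  ultimately show ?thesis
    using that by blast
qed

lemma penalized_attains_max: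
  fixes U :: "real^'m::finite \<Rightarrow> real \<Rightarrow> real \<Rightarrow> 'b::real_normed_vector"
  assumes cont_init: "continuous_on {((x, y), t). y > 0 \<and> t \<ge> 0} (uncurry3 U)"
    and cont_bdry: "continuous_on {((x, y), t). y \<ge> 0 \<and> t > 0} (uncurry3 U)"
    and init: "\<And>x y. y > 0 \<Longrightarrow> norm (U x y 0) \<le> 1"
    and bound: "\<And>x y t. y \<ge> 0 \<Longrightarrow> t > 0 \<Longrightarrow> norm (U x y t) \<le> B"
    and \<delta>: "\<delta> > 0" and y1: "y1 \<ge> 0" and t1: "t1 > 0"
    and pos: "0 < penalized \<delta> U x1 y1 t1"
  obtains x0 y0 t0 where "0 < penalized \<delta> U x0 y0 t0" "y0 \<ge> 0" "0 < t0" "t0 \<le> t1"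
    "\<And>x y t. y \<ge> 0 \<Longrightarrow> 0 < t \<Longrightarrow> t \<le> t1 \<Longrightarrow> penalized \<delta> U x y t \<le> penalized \<delta> U x0 y0 t0"
proof -
  define \<mu> where "\<mu> = penalized \<delta> U x1 y1 t1"
  define P where "P = (\<lambda>((x, y), t). penalized \<delta> U x y t)"
  define D where "D = {((x::real^'m, y::real), t::real). y \<ge> 0 \<and> 0 < t \<and> t \<le> t1}"
  have "\<mu> > 0" "B > 0"
    using pos norm_gt_1_if_penalized_pos[OF pos] bound[OF y1 t1, of x1] \<delta> t1 unfolding \<mu>_def by auto
  then obtain \<tau> where \<tau>: "\<tau> > 0" "\<And>x y t. y \<ge> 0 \<Longrightarrow> 0 < t \<Longrightarrow> t < \<tau> \<Longrightarrow> penalized \<delta> U x y t < \<mu>"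
    using penalized_less_near_initial_time[OF cont_init init bound \<open>B > 0\<close> \<delta> \<open>\<mu> > 0\<close>] by blast
  define K where "K = {((x::real^'m, y::real), t::real). inner x x + y\<^sup>2 \<le> B\<^sup>2 / \<delta> \<and> 0 \<le> y \<and> \<tau> \<le> t \<and> t \<le> t1}"
  have "K \<subseteq> D" "continuous_on K P"
    unfolding K_def D_def P_def using \<tau>(1)
    by (auto intro!: continuous_on_subset[OF continuous_on_penalized[OF cont_bdry]])
  moreover have "p \<in> K" if "p \<in> D" "\<mu> \<le> P p" for p
  proof -
    obtain x y t where p: "p = ((x, y), t)" "y \<ge> 0" "0 < t" "t \<le> t1"
      using \<open>p \<in> D\<close> unfolding D_def by auto
    with that have \<mu>_le: "\<mu> \<le> penalized \<delta> U x y t"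
      unfolding P_def by simp
    have "inner x x + y\<^sup>2 < B\<^sup>2 / \<delta>"
      by (rule penalized_superlevel_bounds(1)[OF \<delta> \<open>0 < t\<close> \<open>\<mu> > 0\<close> \<mu>_le bound[OF p(2,3)]])
    moreover have "\<tau> \<le> t"
      using \<tau>(2)[OF p(2,3), of x] \<mu>_le by (meson not_le)
    ultimately show ?thesis
      unfolding K_def using p by simp
  qed
  moreover have "((x1, y1), t1) \<in> D" "\<mu> \<le> P ((x1, y1), t1)"
    unfolding D_def P_def \<mu>_def using y1 t1 by auto
  ultimately obtain p0 where p0: "p0 \<in> K" "\<mu> \<le> P p0" "\<And>p. p \<in> D \<Longrightarrow> P p \<le> P p0"
    using compact_superlevel_attains_sup[of K P D \<mu> "((x1, y1), t1)"] compact_cylinder unfolding K_def by blast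
  obtain x0 y0 t0 where p0_eq: "p0 = ((x0, y0), t0)"
    by (metis prod.collapse)
  show ?thesis
  proof (rule that[of x0 y0 t0])
    show "y0 \<ge> 0" "0 < t0" "t0 \<le> t1"
      using p0(1) \<tau>(1) unfolding p0_eq K_def by auto
    show "0 < penalized \<delta> U x0 y0 t0"
      using p0(2) \<open>\<mu> > 0\<close> unfolding p0_eq P_def by simp
    show "penalized \<delta> U x y t \<le> penalized \<delta> U x0 y0 t0" if "y \<ge> 0" "0 < t" "t \<le> t1" for x y t
      using p0(3)[of "((x, y), t)"] that unfolding p0_eq P_def D_def by simp
  qed
qed

theorem lemma4p1:
  fixes u0 :: "real^'m::finite \<Rightarrow> real^'l::finite"
    and U :: "real^'m \<Rightarrow> real \<Rightarrow> real \<Rightarrow> real^'l"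
    and \<epsilon> :: real
  assumes eps: "\<epsilon> > 0"
    and u0_space: "hdot_half u0"
    and u0_sphere: "AE x in lborel. norm (u0 x) = 1"
    and bounded: "\<exists>B. \<forall>x y t. y > 0 \<longrightarrow> t > 0 \<longrightarrow> norm (U x y t) \<le> B"
    and smooth: "smooth_on {((x, y), t). y > 0 \<and> t > 0} (uncurry3 U)"
    and heat: "\<And>x y t. y > 0 \<Longrightarrow> t > 0 \<Longrightarrow> dt U x y t = laplacian_xy U x y t"
    and cont_init: "continuous_on {((x, y), t). y > 0 \<and> t \<ge> 0} (uncurry3 U)"
    and init: "\<And>x y. y > 0 \<Longrightarrow> U x y 0 = harmonic_ext u0 x y"
    and cont_bdry: "continuous_on {((x, y), t). y \<ge> 0 \<and> t > 0} (uncurry3 U)"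
    and bdry: "\<And>x t. t > 0 \<Longrightarrow>
       ((\<lambda>y. dy U x y t) \<longlongrightarrow> - (1 / \<epsilon>\<^sup>2) *\<^sub>R ((1 - (norm (U x 0 t))\<^sup>2) *\<^sub>R U x 0 t)) (at_right 0)"
  shows "\<forall>x y t. y > 0 \<longrightarrow> t > 0 \<longrightarrow> norm (U x y t) \<le> 1"
proof (rule ccontr)
  assume "\<not> ?thesis"
  then obtain x1 y1 t1 where "y1 > 0" "t1 > 0" "1 < norm (U x1 y1 t1)"
    by (auto simp: not_le)
  then obtain \<delta> where \<delta>: "\<delta> > 0" "0 < penalized \<delta> U x1 y1 t1"
    using penalized_pos_for_small_weight by blast
  obtain B where "\<And>x y t. y > 0 \<Longrightarrow> t > 0 \<Longrightarrow> norm (U x y t) \<le> B"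
    using bounded by blast
  note bound = norm_le_on_boundary[OF cont_bdry this]
  have init_le: "norm (U x y 0) \<le> 1" if "y > 0" for x y
    using norm_harmonic_ext_le_1[OF that _ u0_sphere] u0_space init[OF that] by (simp add: hdot_half_def)
  obtain x0 y0 t0 where pos: "0 < penalized \<delta> U x0 y0 t0" and "y0 \<ge> 0" "0 < t0" "t0 \<le> t1"
    and max: "\<And>x y t. y \<ge> 0 \<Longrightarrow> 0 < t \<Longrightarrow> t \<le> t1 \<Longrightarrow> penalized \<delta> U x y t \<le> penalized \<delta> U x0 y0 t0"
    using penalized_attains_max[OF cont_init cont_bdry init_le bound \<delta>(1) less_imp_le[OF \<open>y1 > 0\<close>] \<open>t1 > 0\<close> \<delta>(2)]
    by blast
  show False
  proof (cases "y0 = 0")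
    case True
    with norm_gt_1_if_penalized_pos[OF pos] \<delta>(1) \<open>0 < t0\<close> eps
    have "0 < inner (U x0 0 t0) (- (1 / \<epsilon>\<^sup>2) *\<^sub>R ((1 - (norm (U x0 0 t0))\<^sup>2) *\<^sub>R U x0 0 t0))"
      by (intro inner_scaleR_one_minus_power2_norm_pos) auto
    then obtain y where "y > 0" "penalized \<delta> U x0 0 t0 < penalized \<delta> U x0 y t0"
      using penalized_increases_off_boundary[OF smooth cont_bdry \<open>0 < t0\<close> bdry[OF \<open>0 < t0\<close>]] by blast
    with max[of y t0 x0] True \<open>0 < t0\<close> \<open>t0 \<le> t1\<close> show False
      by simp
  next
    case False
    interpret penalized_interior_max U \<delta> y0 t0 x0
      using smooth False \<open>y0 \<ge> 0\<close> \<open>0 < t0\<close> \<open>t0 \<le> t1\<close> max by unfold_locales auto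
    show False
      using not_heat_solution[OF \<delta>(1)] heat False \<open>y0 \<ge> 0\<close> \<open>0 < t0\<close> by simp
  qed
qed

end
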